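(* (i) If the communicated systems are qubits composed according to quantum theory (i.e. $k$ qubits form the quantum system on $(\mathbb{C}^2)^{\otimes k}$), then the game $\mathcal{P}_D^{[12]}$ cannot be won perfectly with $3$ qubits but can be won perfectly with $4$ qubits; hence $4$ qubits of communication are required. (ii) In the $SEP$ composition $\mathbb{C}^2\otimes_{\min}\mathbb{C}^2$ of two qubits, the twelve product states $$\mathcal{A}=\{|\kappa\kappa\rangle,\ |\kappa\bar\kappa\rangle,\ |\bar\kappa\kappa\rangle,\ |\bar\kappa\bar\kappa\rangle\}_{\kappa\in\{x,y,z\}}$$ (as density operators) are pairwise distinguishable; consequently two $SEP$-bits suffice to win $\mathcal{P}_D^{[12]}$ perfectly.
   Context: A quantum system on Hilbert space $\mathcal{H}$ has states the density operators on $\mathcal{H}$ and measurements the POVMs. $SEP$ composition of $m$ qubits ($m$ "$SEP$-bits"; for $m=2$ written $\mathbb{C}^2\otimes_{\min}\mathbb{C}^2$): the state cone is the set of finite sums of tensor products $\pi_1\otimes\cdots\otimes\pi_m$ of positive semidefinite operators on $\mathbb{C}^2$; normalized states are the fully separable density operators on $(\mathbb{C}^2)^{\otimes m}$; the effect cone is its dual $\{Y \text{ Hermitian}: \operatorname{Tr}(XY)\ge 0 \text{ for all } X \text{ in the state cone}\}$; a measurement is a finite family of elements of the dual cone summing to the identity, with outcome probabilities $\operatorname{Tr}(E_i\rho)$. A set of states $\{\omega_i\}$ is pairwise distinguishable if for every $i\neq j$ there is a two-outcome measurement $\{E,\mathbf 1-E\}$ with $\operatorname{Tr}(E\omega_i)=1$,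 $\operatorname{Tr}(E\omega_j)=0$. Here $|\alpha\beta\rangle=|\alpha\rangle\otimes|\beta\rangle$ and $|\kappa\rangle$ ($|\bar\kappa\rangle$) is the eigenvector of the Pauli operator $\sigma_\kappa$ with eigenvalue $+1$ ($-1$). The game $\mathcal{P}_D^{[n]}$: a referee gives Alice a message $\eta$ from a set $\mathcal{N}$, $|\mathcal{N}|=n$, and asks Bob whether Alice's message was $\eta$ or $\eta'$ for some $\eta'\neq\eta$; Alice and Bob share no correlations, Alice encodes $\eta$ into a state $\omega_\eta$ of the communicated system and sends it to Bob, who for each unordered pair $\{\eta,\eta'\}$ performs a measurement whose outcome is his answer; perfect winning means Bob answers correctly with probability $1$ for every $\eta$ and every $\eta'\neq\eta$. *)

theory Defs
  imports Complex_Main "Jordan_Normal_Form.Matrix"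
begin

definition mtrace :: "complex mat \<Rightarrow> complex" where
  "mtrace A = (\<Sum>i<dim_row A. A $$ (i, i))"

definition hermitian :: "nat \<Rightarrow> complex mat \<Rightarrow> bool" where
  "hermitian d A \<longleftrightarrow> A \<in> carrier_mat d d \<and> (\<forall>i<d. \<forall>j<d. A $$ (j, i) = cnj (A $$ (i, j)))"

definition psd :: "nat \<Rightarrow> complex mat \<Rightarrow> bool" where
  "psd d A \<longleftrightarrow> A \<in> carrier_mat d d \<and>
     (\<forall>v \<in> carrier_vec d.
        Im (\<Sum>i<d. \<Sum>j<d. cnj (v $ i) * A $$ (i, j) * v $ j) = 0 \<and>
        Re (\<Sum>i<d. \<Sum>j<d. cnj (v $ i) * A $$ (i, j) * v $ j) \<ge> 0)"

definition density :: "nat \<Rightarrow> complex mat \<Rightarrow> bool" where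
  "density d \<rho> \<longleftrightarrow> psd d \<rho> \<and> mtrace \<rho> = 1"

text \<open>For every
  (unordered) pair {eta, eta'} Bob performs a two-outcome measurement whose outcomes are
  labelled by the answers eta, eta' (effects in Eff summing to the identity); perfect
  winning: he answers correctly with probability 1 whichever of the two was sent.\<close>
definition wins_PD :: "nat \<Rightarrow> nat \<Rightarrow> complex mat set \<Rightarrow> complex mat set \<Rightarrow> bool" where
  "wins_PD n d S Eff \<longleftrightarrow>
     (\<exists>\<omega> :: nat \<Rightarrow> complex mat.
        (\<forall>\<eta><n. \<omega> \<eta> \<in> S) \<and>
        (\<forall>\<eta><n. \<forall>\<eta>'<n. \<eta> \<noteq> \<eta>' \<longrightarrow>
           (\<exists>E :: nat \<Rightarrow> complex mat.
              E \<eta> \<in> Eff \<and> E \<eta>' \<in> Eff \<and> E \<eta> + E \<eta>' = 1\<^sub>m d \<and>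
              mtrace (E \<eta> * \<omega> \<eta>) = 1 \<and> mtrace (E \<eta>' * \<omega> \<eta>') = 1)))"

section \<open>Quantum composition of k qubits: system on (C^2)^(tensor k) = C^(2^k)\<close>

definition qstates :: "nat \<Rightarrow> complex mat set" where
  "qstates k = {\<rho>. density (2 ^ k) \<rho>}"

definition qeffects :: "nat \<Rightarrow> complex mat set" where
  "qeffects k = {E. psd (2 ^ k) E}"

definition wins_PD_qubits :: "nat \<Rightarrow> nat \<Rightarrow> bool" where
  "wins_PD_qubits n k \<longleftrightarrow> wins_PD n (2 ^ k) (qstates k) (qeffects k)"

text \<open>Kronecker product of 2x2 matrices; basis |ab> has index 2a+b\<close>
definition kron2 :: "complex mat \<Rightarrow> complex mat \<Rightarrow> complex mat" where
  "kron2 A B = mat 4 4 (\<lambda>(r, c). A $$ (r div 2, c div 2) * B $$ (r mod 2, c mod 2))"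

definition sep_cone :: "complex mat set" where
  "sep_cone = {X. \<exists>(m::nat) P Q. (\<forall>i<m. psd 2 (P i) \<and> psd 2 (Q i)) \<and>
                  X = mat 4 4 (\<lambda>rc. \<Sum>i<m. kron2 (P i) (Q i) $$ rc)}"

definition sep_states :: "complex mat set" where
  "sep_states = {X \<in> sep_cone. mtrace X = 1}"

definition sep_effects :: "complex mat set" where
  "sep_effects = {Y. hermitian 4 Y \<and>
     (\<forall>X \<in> sep_cone. Im (mtrace (X * Y)) = 0 \<and> Re (mtrace (X * Y)) \<ge> 0)}"

definition sep_pairwise_distinguishable :: "'i set \<Rightarrow> ('i \<Rightarrow> complex mat) \<Rightarrow> bool" where
  "sep_pairwise_distinguishable I \<omega> \<longleftrightarrow>
     (\<forall>i\<in>I. \<forall>j\<in>I. i \<noteq> j \<longrightarrow>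
        (\<exists>E. E \<in> sep_effects \<and> 1\<^sub>m 4 - E \<in> sep_effects \<and>
             mtrace (E * \<omega> i) = 1 \<and> mtrace (E * \<omega> j) = 0))"

datatype pauli = PX | PY | PZ

text \<open>ket k False = |k> (eigenvalue +1 of sigma_k), ket k True = |k-bar> (eigenvalue -1)\<close>
definition ket :: "pauli \<Rightarrow> bool \<Rightarrow> complex vec" where
  "ket k b = (let s = complex_of_real (1 / sqrt 2) in
     (case (k, b) of
        (PX, False) \<Rightarrow> vec_of_list [s, s]
      | (PX, True)  \<Rightarrow> vec_of_list [s, - s]
      | (PY, False) \<Rightarrow> vec_of_list [s, \<i> * s]
      | (PY, True)  \<Rightarrow> vec_of_list [s, - \<i> * s]
      | (PZ, False) \<Rightarrow> vec_of_list [1, 0]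
      | (PZ, True)  \<Rightarrow> vec_of_list [0, 1]))"

definition ket2 :: "complex vec \<Rightarrow> complex vec \<Rightarrow> complex vec" where
  "ket2 a b = vec 4 (\<lambda>i. a $ (i div 2) * b $ (i mod 2))"

definition proj4 :: "complex vec \<Rightarrow> complex mat" where
  "proj4 v = mat 4 4 (\<lambda>(i, j). v $ i * cnj (v $ j))"

text \<open>A_state (k, b1, b2) = density operator of |k^(b1) k^(b2)>; 12 indices\<close>
definition A_state :: "pauli \<times> bool \<times> bool \<Rightarrow> complex mat" where
  "A_state = (\<lambda>(k, b1, b2). proj4 (ket2 (ket k b1) (ket k b2)))"

end

theory Submission
  imports Defs
begin

(* (i) If Bob's measurement {E, 1 - E} answers perfectly between the messages eta and eta', then
   1 - E vanishes on the range of rho_eta and E on the range of rho_eta'.  Vectors x and y in these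
   ranges therefore satisfy <x, y> = <x, (1 - E) y> = <(1 - E) x, y> = 0, so the n encoded states carry
   pairwise orthogonal nonzero vectors and n <= 2^k; basis states attain the bound, and 12 <= 2^k
   forces k >= 4.

   (ii) Consider the operators 1/2 (1 + alpha sigma_a (x) sigma_b + beta sigma_c (x) sigma_e).  On a
   product of positive operators with Bloch vectors p and q they take the value
   1/2 (p_0 q_0 + alpha p_a q_b + beta p_c q_e), which Cauchy-Schwarz on the Bloch cone keeps
   nonnegative when |alpha|, |beta| <= 1 and the two axes differ; so they are SEP effects, although in
   general not positive operators.  Two states of A with different bases are separated by the
   correlations along both bases, two with the same basis by a single sigma_k on a qubit where they
   differ. *)

section \<open>Positive semidefinite kernels\<close>

(* Matrices are handled as kernels nat => nat => complex, so that the Cholesky step below needs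
   no carrier bookkeeping; sesq d F y x is the form <y, F x> on C^d. *)
definition sesq :: "nat \<Rightarrow> (nat \<Rightarrow> nat \<Rightarrow> complex) \<Rightarrow> (nat \<Rightarrow> complex) \<Rightarrow> (nat \<Rightarrow> complex) \<Rightarrow> complex"
  where "sesq d F y x = (\<Sum>i<d. \<Sum>j<d. cnj (y i) * F i j * x j)"

definition psd_kernel :: "nat \<Rightarrow> (nat \<Rightarrow> nat \<Rightarrow> complex) \<Rightarrow> bool"
  where "psd_kernel d F \<longleftrightarrow> (\<forall>x. Im (sesq d F x x) = 0 \<and> Re (sesq d F x x) \<ge> 0)"

definition unit_fn :: "nat \<Rightarrow> nat \<Rightarrow> complex"
  where "unit_fn i = (\<lambda>k. if k = i then 1 else 0)"

abbreviation entries :: "complex mat \<Rightarrow> nat \<Rightarrow> nat \<Rightarrow> complex"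
  where "entries A \<equiv> \<lambda>i j. A $$ (i, j)"

lemma cnj_mult_self: "cnj z * z = complex_of_real ((cmod z)\<^sup>2)"
  using complex_norm_square[of z] by (simp add: mult.commute)

lemma sesq_add_left: "sesq d F (\<lambda>k. y k + z k) x = sesq d F y x + sesq d F z x"
  unfolding sesq_def by (simp add: algebra_simps sum.distrib)

lemma sesq_add_right: "sesq d F y (\<lambda>k. x k + z k) = sesq d F y x + sesq d F y z"
  unfolding sesq_def by (simp add: algebra_simps sum.distrib)

lemma sesq_scale_left: "sesq d F (\<lambda>k. c * y k) x = cnj c * sesq d F y x"
  unfolding sesq_def by (simp add: algebra_simps sum_distrib_left)

lemma sesq_scale_right: "sesq d F y (\<lambda>k. c * x k) = c * sesq d F y x"
  unfolding sesq_def by (simp add: algebra_simps sum_distrib_left)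

lemmas sesq_linear = sesq_add_left sesq_add_right sesq_scale_left sesq_scale_right

lemma sesq_eq_sum_apply: "sesq d F y x = (\<Sum>i<d. cnj (y i) * (\<Sum>j<d. F i j * x j))"
  unfolding sesq_def by (simp add: sum_distrib_left mult.assoc)

lemma sum_mult_unit_fn: "k < d \<Longrightarrow> (\<Sum>j<d. f j * unit_fn k j) = f k"
  unfolding unit_fn_def by (simp add: if_distrib[of "\<lambda>z. _ * z"] cong: if_cong)

lemma sesq_unit_fn_right: "k < d \<Longrightarrow> sesq d F y (unit_fn k) = (\<Sum>i<d. cnj (y i) * F i k)"
  unfolding sesq_eq_sum_apply by (simp add: sum_mult_unit_fn)

lemma sum_cnj_unit_fn_mult: "k < d \<Longrightarrow> (\<Sum>i<d. cnj (unit_fn k i) * f i) = f k"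
  unfolding unit_fn_def by (simp add: if_distrib[of cnj] if_distrib[of "\<lambda>z. z * _"] cong: if_cong)

lemma sesq_unit_fn: "i < d \<Longrightarrow> j < d \<Longrightarrow> sesq d F (unit_fn i) (unit_fn j) = F i j"
  by (simp add: sesq_unit_fn_right sum_cnj_unit_fn_mult)

lemma psd_kernel_real: "psd_kernel d F \<Longrightarrow> sesq d F x x = complex_of_real (Re (sesq d F x x))"
  unfolding psd_kernel_def by (simp add: complex_eq_iff)

lemma psd_kernel_diag: "psd_kernel d F \<Longrightarrow> i < d \<Longrightarrow> Im (F i i) = 0 \<and> Re (F i i) \<ge> 0"
  unfolding psd_kernel_def using sesq_unit_fn[of i d i F] by metis

lemma psd_kernel_hermitian:
  assumes F: "psd_kernel d F" and ij: "i < d" "j < d"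
  shows "F j i = cnj (F i j)"
proof -
  have expand: "sesq d F (\<lambda>k. unit_fn i k + c * unit_fn j k) (\<lambda>k. unit_fn i k + c * unit_fn j k)
      = F i i + c * F i j + cnj c * F j i + cnj c * c * F j j" for c
    by (simp add: sesq_linear sesq_unit_fn ij algebra_simps)
  have real: "Im (F i i + c * F i j + cnj c * F j i + cnj c * c * F j j) = 0" for c
    using F unfolding psd_kernel_def expand[symmetric] by blast
  have "Im (F i j + F j i) = 0" "Re (F i j - F j i) = 0"
    using real[of 1] real[of \<i>] psd_kernel_diag[OF F ij(1)] psd_kernel_diag[OF F ij(2)] by simp_all
  then show ?thesis by (simp add: complex_eq_iff)
qed

lemma sesq_swap: assumes "psd_kernel d F" shows "sesq d F y x = cnj (sesq d F x y)"
proof -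
  have "cnj (sesq d F x y) = (\<Sum>i<d. \<Sum>j<d. x i * cnj (F i j) * cnj (y j))"
    unfolding sesq_def by simp
  also have "\<dots> = (\<Sum>i<d. \<Sum>j<d. cnj (y j) * F j i * x i)"
  proof (intro sum.cong refl)
    fix i j assume "i \<in> {..<d}" "j \<in> {..<d}"
    then have "F j i = cnj (F i j)" by (intro psd_kernel_hermitian[OF assms]) auto
    then show "x i * cnj (F i j) * cnj (y j) = cnj (y j) * F j i * x i" by simp
  qed
  also have "\<dots> = sesq d F y x"
    unfolding sesq_def by (rule sum.swap)
  finally show ?thesis by simp
qed

lemma quadratic_nonneg_imp_le:
  fixes a b c :: real
  assumes nonneg: "\<And>t. 0 \<le> a - 2 * t * b + t\<^sup>2 * b * c" and "0 \<le> a" "0 \<le> b" "0 \<le> c"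
  shows "b \<le> a * c"
proof (cases "b = 0")
  case True
  then show ?thesis using assms by simp
next
  case b: False
  show ?thesis
  proof (cases "c = 0")
    case True
    have "0 \<le> a - 2 * ((a + 1) / (2 * b)) * b" using nonneg[of "(a + 1) / (2 * b)"] True by simp
    then show ?thesis using b by simp
  next
    case False
    have "0 \<le> a - 2 * (1 / c) * b + (1 / c)\<^sup>2 * b * c" by (rule nonneg)
    then have "0 \<le> a - b / c" using False by (simp add: power2_eq_square field_simps)
    then show ?thesis using False \<open>0 \<le> c\<close> by (simp add: field_simps)
  qed
qed

lemma psd_kernel_Cauchy_Schwarz:
  assumes F: "psd_kernel d F"
  shows "(cmod (sesq d F y x))\<^sup>2 \<le> Re (sesq d F x x) * Re (sesq d F y y)"
proof -
  define c where "c = sesq d F y x"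
  define qx where "qx = Re (sesq d F x x)"
  define qy where "qy = Re (sesq d F y y)"
  have xx: "sesq d F x x = of_real qx" and yy: "sesq d F y y = of_real qy"
    using psd_kernel_real[OF F] by (simp_all add: qx_def qy_def)
  have xy: "sesq d F x y = cnj c" using sesq_swap[OF F, of x y] by (simp add: c_def)
  have "0 \<le> qx - 2 * t * (cmod c)\<^sup>2 + t\<^sup>2 * (cmod c)\<^sup>2 * qy" for t :: real
  proof -
    define v where "v = (\<lambda>k. x k + (- (of_real t * c)) * y k)"
    have "sesq d F v v = of_real qx - 2 * of_real t * (c * cnj c) + (of_real t)\<^sup>2 * (c * cnj c) * of_real qy"
      unfolding v_def sesq_linear xx yy xy c_def[symmetric] by (simp add: power2_eq_square algebra_simps)
    also have "\<dots> = complex_of_real (qx - 2 * t * (cmod c)\<^sup>2 + t\<^sup>2 * (cmod c)\<^sup>2 * qy)"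
      unfolding complex_norm_square[symmetric] by simp
    finally have "sesq d F v v = complex_of_real (qx - 2 * t * (cmod c)\<^sup>2 + t\<^sup>2 * (cmod c)\<^sup>2 * qy)" .
    then show ?thesis using F unfolding psd_kernel_def by (metis Re_complex_of_real)
  qed
  then show ?thesis
    unfolding c_def[symmetric] qx_def[symmetric] qy_def[symmetric]
    by (rule quadratic_nonneg_imp_le) (use F in \<open>auto simp: psd_kernel_def qx_def qy_def\<close>)
qed

lemma psd_kernel_null_vector:
  assumes F: "psd_kernel d F" and null: "sesq d F x x = 0" and i: "i < d"
  shows "(\<Sum>j<d. F i j * x j) = 0"
proof -
  define w where "w = (\<lambda>i. \<Sum>j<d. F i j * x j)"
  define N where "N = (\<Sum>i<d. (cmod (w i))\<^sup>2)"
  have "sesq d F w x = (\<Sum>i<d. cnj (w i) * w i)"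
    unfolding sesq_eq_sum_apply w_def ..
  also have "\<dots> = of_real N"
    unfolding N_def of_real_sum by (simp only: cnj_mult_self)
  finally have "sesq d F w x = of_real N" .
  then have "N\<^sup>2 \<le> 0"
    using psd_kernel_Cauchy_Schwarz[OF F, of w x] null by simp
  then have "N = 0" by simp
  then have "(cmod (w i))\<^sup>2 = 0"
    using i unfolding N_def by (subst (asm) sum_nonneg_eq_0_iff) auto
  then show ?thesis unfolding w_def by simp
qed

lemma psd_kernel_zero_diag_column:
  assumes F: "psd_kernel d F" and k: "k < d" "F k k = 0" and i: "i < d"
  shows "F i k = 0"
  using psd_kernel_null_vector[OF F _ i, of "unit_fn k"] sesq_unit_fn[OF k(1) k(1), of F]
    sum_mult_unit_fn[OF k(1)] k(2) by simp

definition trace_prod :: "nat \<Rightarrow> (nat \<Rightarrow> nat \<Rightarrow> complex) \<Rightarrow> (nat \<Rightarrow> nat \<Rightarrow> complex) \<Rightarrow> complex"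
  where "trace_prod d G A = (\<Sum>i<d. \<Sum>k<d. G i k * A k i)"

lemma trace_prod_rank_one_add:
  "trace_prod d G (\<lambda>i j. x i * cnj (x j) + A i j) = sesq d G x x + trace_prod d G A"
  unfolding trace_prod_def sesq_def
  by (simp add: distrib_left sum.distrib mult_ac)

lemma trace_prod_commute: "trace_prod d G A = trace_prod d A G"
  unfolding trace_prod_def by (subst sum.swap) (simp add: mult.commute)

definition diag_support :: "nat \<Rightarrow> (nat \<Rightarrow> nat \<Rightarrow> complex) \<Rightarrow> nat set"
  where "diag_support d A = {k. k < d \<and> A k k \<noteq> 0}"

lemma psd_kernel_minus_column:
  assumes A: "psd_kernel d A" and k: "k < d" and s: "0 < s" "s * s = Re (A k k)"
  shows "psd_kernel d (\<lambda>i j. A i j - A i k / of_real s * cnj (A j k / of_real s))"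
  unfolding psd_kernel_def
proof
  fix v
  define x where "x = (\<lambda>i. A i k / of_real s)"
  define c where "c = (\<Sum>i<d. cnj (v i) * x i)"
  have "sesq d (\<lambda>i j. A i j - x i * cnj (x j)) v v
      = sesq d A v v - (\<Sum>i<d. \<Sum>j<d. (cnj (v i) * x i) * (cnj (x j) * v j))"
    unfolding sesq_def by (simp add: algebra_simps sum_subtractf)
  also have "\<dots> = sesq d A v v - c * cnj c"
    unfolding c_def cnj_sum sum_product by (simp add: mult.commute)
  finally have eq: "sesq d (\<lambda>i j. A i j - x i * cnj (x j)) v v = of_real (Re (sesq d A v v) - (cmod c)\<^sup>2)"
    using psd_kernel_real[OF A, of v] complex_norm_square[of c] by simp
  have "c = sesq d A v (unit_fn k) / of_real s"
    unfolding c_def sesq_unit_fn_right[OF k] x_def by (simp add: sum_divide_distrib)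
  then have "(cmod c)\<^sup>2 = (cmod (sesq d A v (unit_fn k)))\<^sup>2 / (s * s)"
    using s by (simp add: norm_divide power_divide power2_eq_square)
  also have "\<dots> \<le> Re (sesq d A (unit_fn k) (unit_fn k)) * Re (sesq d A v v) / (s * s)"
    using psd_kernel_Cauchy_Schwarz[OF A, of v "unit_fn k"] by (intro divide_right_mono) simp_all
  also have "\<dots> = Re (sesq d A v v)"
    unfolding sesq_unit_fn[OF k k] s(2)[symmetric] using s(1) by simp
  finally show "Im (sesq d (\<lambda>i j. A i j - A i k / of_real s * cnj (A j k / of_real s)) v v) = 0 \<and>
      Re (sesq d (\<lambda>i j. A i j - A i k / of_real s * cnj (A j k / of_real s)) v v) \<ge> 0"
    using eq unfolding x_def by simp
qed

(* One step of a Cholesky factorisation. *)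
lemma psd_kernel_rank_one_split:
  assumes A: "psd_kernel d A" and k: "k < d" "A k k \<noteq> 0"
  obtains x A' where "x k \<noteq> 0" "psd_kernel d A'" "\<And>i j. A i j = x i * cnj (x j) + A' i j"
    "diag_support d A' \<subset> diag_support d A"
proof -
  define s where "s = sqrt (Re (A k k))"
  define x where "x = (\<lambda>i. A i k / of_real s)"
  define A' where "A' = (\<lambda>i j. A i j - x i * cnj (x j))"
  have "Re (A k k) > 0"
    using psd_kernel_diag[OF A k(1)] k(2) by (auto simp: complex_eq_iff order_le_less)
  then have s: "s > 0" "s * s = Re (A k k)" and Akk: "A k k = of_real (s * s)"
    using psd_kernel_diag[OF A k(1)] by (auto simp: s_def complex_eq_iff)
  have xk: "x k = of_real s" unfolding x_def Akk using s(1) by simp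
  have "psd_kernel d A'"
    unfolding A'_def x_def by (rule psd_kernel_minus_column[OF A k(1) s])
  moreover have "diag_support d A' \<subset> diag_support d A"
  proof -
    have "x j = 0" if "j < d" "A j j = 0" for j
    proof -
      have "A k j = 0" by (rule psd_kernel_zero_diag_column[OF A that(1,2) k(1)])
      then show ?thesis using psd_kernel_hermitian[OF A k(1) that(1)] by (simp add: x_def)
    qed
    then have "diag_support d A' \<subseteq> diag_support d A" by (auto simp: diag_support_def A'_def)
    moreover have "k \<in> diag_support d A - diag_support d A'"
      using k xk Akk by (simp add: diag_support_def A'_def)
    ultimately show ?thesis by blast
  qed
  moreover have "\<And>i j. A i j = x i * cnj (x j) + A' i j" by (simp add: A'_def)
  moreover have "x k \<noteq> 0" using xk s(1) by simp
  ultimately show ?thesis using that by blast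
qed

lemma trace_prod_psd_nonneg:
  assumes G: "psd_kernel d G" and A: "psd_kernel d A"
  shows "Im (trace_prod d G A) = 0 \<and> Re (trace_prod d G A) \<ge> 0"
  using A
proof (induction "card (diag_support d A)" arbitrary: A rule: less_induct)
  case (less A)
  show ?case
  proof (cases "diag_support d A = {}")
    case True
    have "A i k = 0" if "i < d" "k < d" for i k
    proof (rule psd_kernel_zero_diag_column[OF less.prems that(2) _ that(1)])
      show "A k k = 0" using True that(2) by (auto simp: diag_support_def)
    qed
    then have "trace_prod d G A = 0" unfolding trace_prod_def by simp
    then show ?thesis by simp
  next
    case False
    then obtain k where k: "k < d" "A k k \<noteq> 0" by (auto simp: diag_support_def)
    obtain x A' where "x k \<noteq> 0" and A': "psd_kernel d A'" "\<And>i j. A i j = x i * cnj (x j) + A' i j"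
      and smaller: "diag_support d A' \<subset> diag_support d A"
      by (rule psd_kernel_rank_one_split[OF less.prems k]) blast
    have "card (diag_support d A') < card (diag_support d A)"
      by (rule psubset_card_mono[OF _ smaller]) (simp add: diag_support_def)
    then have "Im (trace_prod d G A') = 0 \<and> Re (trace_prod d G A') \<ge> 0"
      using less.hyps A'(1) by blast
    moreover have "A = (\<lambda>i j. x i * cnj (x j) + A' i j)" using A'(2) by blast
    ultimately show ?thesis
      using G unfolding psd_kernel_def by (simp add: trace_prod_rank_one_add)
  qed
qed

(* Stands for a nonzero vector in the range of A, through the one property of it that is used. *)
definition support_vector :: "nat \<Rightarrow> (nat \<Rightarrow> nat \<Rightarrow> complex) \<Rightarrow> (nat \<Rightarrow> complex) \<Rightarrow> bool"
  where "support_vector d A x \<longleftrightarrow> (\<exists>k<d. x k \<noteq> 0) \<and>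
     (\<forall>G. psd_kernel d G \<longrightarrow> trace_prod d G A = 0 \<longrightarrow> (\<forall>i<d. (\<Sum>j<d. G i j * x j) = 0))"

lemma psd_kernel_support_vector:
  assumes A: "psd_kernel d A" and trace: "(\<Sum>k<d. A k k) \<noteq> 0"
  obtains x where "support_vector d A x"
proof -
  obtain k where k: "k < d" "A k k \<noteq> 0" using trace by (meson lessThan_iff sum.neutral)
  obtain x A' where x: "x k \<noteq> 0" and A': "psd_kernel d A'"
    and A_eq: "\<And>i j. A i j = x i * cnj (x j) + A' i j"
    by (rule psd_kernel_rank_one_split[OF A k]) blast
  have "A = (\<lambda>i j. x i * cnj (x j) + A' i j)" using A_eq by blast
  then have split: "trace_prod d G A = sesq d G x x + trace_prod d G A'" for G
    by (simp add: trace_prod_rank_one_add)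
  have "(\<Sum>j<d. G i j * x j) = 0" if G: "psd_kernel d G" and "trace_prod d G A = 0" "i < d" for G i
  proof (rule psd_kernel_null_vector[OF G _ \<open>i < d\<close>])
    have "Im (sesq d G x x) = 0 \<and> Re (sesq d G x x) \<ge> 0" using G unfolding psd_kernel_def by blast
    moreover have "Im (trace_prod d G A') = 0 \<and> Re (trace_prod d G A') \<ge> 0"
      by (rule trace_prod_psd_nonneg[OF G A'])
    ultimately show "sesq d G x x = 0"
      using \<open>trace_prod d G A = 0\<close> unfolding split by (simp add: complex_eq_iff)
  qed
  then show ?thesis using that k(1) x unfolding support_vector_def by blast
qed

lemma sum_cnj_mult_self: "(\<Sum>l<d. cnj (v l) * v l) = of_real (\<Sum>l<d. (cmod (v l))\<^sup>2)"
  unfolding of_real_sum by (simp only: cnj_mult_self)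

lemma orthonormal_Bessel:
  fixes u :: "nat \<Rightarrow> nat \<Rightarrow> complex"
  assumes orthonormal: "\<And>a b. a < n \<Longrightarrow> b < n \<Longrightarrow> (\<Sum>m<d. cnj (u a m) * u b m) = (if a = b then 1 else 0)"
    and l: "l < d"
  shows "(\<Sum>a<n. (cmod (u a l))\<^sup>2) \<le> 1"
proof -
  define S where "S = (\<Sum>a<n. (cmod (u a l))\<^sup>2)"
  define y where "y = (\<lambda>m. \<Sum>a<n. cnj (u a l) * u a m)"
  have "(\<Sum>m<d. cnj (y m) * y m)
      = (\<Sum>m<d. \<Sum>a<n. \<Sum>b<n. (u b l * cnj (u a l)) * (cnj (u b m) * u a m))"
    unfolding y_def by (simp add: sum_product mult_ac)
  also have "\<dots> = (\<Sum>a<n. \<Sum>b<n. (u b l * cnj (u a l)) * (\<Sum>m<d. cnj (u b m) * u a m))"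
    by (simp add: sum_distrib_left sum.swap[of _ "{..<d}"])
  also have "\<dots> = (\<Sum>a<n. u a l * cnj (u a l))"
    by (simp add: orthonormal if_distrib[of "\<lambda>z. _ * z"] cong: if_cong)
  also have "\<dots> = of_real S"
    unfolding S_def of_real_sum by (simp only: complex_norm_square)
  finally have "complex_of_real (\<Sum>m<d. (cmod (y m))\<^sup>2) = of_real S"
    by (simp only: sum_cnj_mult_self)
  then have norm_y: "(\<Sum>m<d. (cmod (y m))\<^sup>2) = S"
    by (simp only: of_real_eq_iff)
  have "y l = of_real S"
    unfolding y_def S_def of_real_sum by (simp only: cnj_mult_self)
  moreover have S0: "0 \<le> S" unfolding S_def by (simp add: sum_nonneg)
  ultimately have "S\<^sup>2 = (cmod (y l))\<^sup>2" by (simp only: norm_of_real abs_of_nonneg)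
  also have "\<dots> \<le> S"
    unfolding norm_y[symmetric] by (rule member_le_sum) (use l in auto)
  finally have "S * S \<le> S * 1" by (simp add: power2_eq_square)
  then have "S \<le> 1" using S0 by (cases "S = 0") (simp_all add: mult_le_cancel_left_pos)
  then show ?thesis by (simp only: S_def)
qed

lemma orthonormal_card_le:
  fixes u :: "nat \<Rightarrow> nat \<Rightarrow> complex"
  assumes orthonormal: "\<And>a b. a < n \<Longrightarrow> b < n \<Longrightarrow> (\<Sum>m<d. cnj (u a m) * u b m) = (if a = b then 1 else 0)"
  shows "n \<le> d"
proof -
  have "(\<Sum>l<d. (cmod (u a l))\<^sup>2) = 1" if "a < n" for a
    using orthonormal[OF that that] unfolding sum_cnj_mult_self by (simp del: of_real_sum)
  then have "real n = (\<Sum>a<n. \<Sum>l<d. (cmod (u a l))\<^sup>2)" by simp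
  also have "\<dots> = (\<Sum>l<d. \<Sum>a<n. (cmod (u a l))\<^sup>2)" by (rule sum.swap)
  also have "\<dots> \<le> (\<Sum>l<d. 1)" by (intro sum_mono orthonormal_Bessel[OF orthonormal]) auto
  finally show ?thesis by simp
qed

lemma orthogonal_nonzero_card_le:
  fixes x :: "nat \<Rightarrow> nat \<Rightarrow> complex"
  assumes nonzero: "\<And>a. a < n \<Longrightarrow> \<exists>l<d. x a l \<noteq> 0"
    and orthogonal: "\<And>a b. a < n \<Longrightarrow> b < n \<Longrightarrow> a \<noteq> b \<Longrightarrow> (\<Sum>l<d. cnj (x a l) * x b l) = 0"
  shows "n \<le> d"
proof (rule orthonormal_card_le)
  define N where "N a = (\<Sum>l<d. (cmod (x a l))\<^sup>2)" for a
  have N: "N a > 0" if a: "a < n" for a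
  proof -
    obtain l where "l < d" "x a l \<noteq> 0" using nonzero[OF a] by blast
    then have "0 < (cmod (x a l))\<^sup>2" by simp
    also have "\<dots> \<le> N a" unfolding N_def by (rule member_le_sum) (use \<open>l < d\<close> in auto)
    finally show ?thesis .
  qed
  fix a b assume ab: "a < n" "b < n"
  have "(\<Sum>m<d. cnj (x a m / sqrt (N a)) * (x b m / sqrt (N b)))
      = (\<Sum>m<d. cnj (x a m) * x b m) / (sqrt (N a) * sqrt (N b))"
    by (simp add: sum_divide_distrib)
  also have "\<dots> = (if a = b then 1 else 0)"
  proof (cases "a = b")
    case True
    have "(\<Sum>m<d. cnj (x b m) * x b m) = of_real (N b)" unfolding N_def by (rule sum_cnj_mult_self)
    then show ?thesis using True N[OF ab(2)] by (simp flip: of_real_mult)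
  next
    case False
    then show ?thesis using orthogonal[OF ab] by simp
  qed
  finally show "(\<Sum>m<d. cnj (x a m / sqrt (N a)) * (x b m / sqrt (N b))) = (if a = b then 1 else 0)" .
qed

section \<open>Perfect winning with qubits\<close>

lemma psd_kernel_entries: assumes "psd d A" shows "psd_kernel d (entries A)"
  unfolding psd_kernel_def
proof
  fix x :: "nat \<Rightarrow> complex"
  have "sesq d (entries A) x x = (\<Sum>i<d. \<Sum>j<d. cnj (vec d x $ i) * A $$ (i, j) * vec d x $ j)"
    unfolding sesq_def by (intro sum.cong refl) simp
  moreover have "Im (\<Sum>i<d. \<Sum>j<d. cnj (vec d x $ i) * A $$ (i, j) * vec d x $ j) = 0 \<and>
      Re (\<Sum>i<d. \<Sum>j<d. cnj (vec d x $ i) * A $$ (i, j) * vec d x $ j) \<ge> 0"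
    using assms vec_carrier[of d x] unfolding psd_def by blast
  ultimately show "Im (sesq d (entries A) x x) = 0 \<and> Re (sesq d (entries A) x x) \<ge> 0"
    by simp
qed

lemma mtrace_carrier: "A \<in> carrier_mat d d \<Longrightarrow> mtrace A = (\<Sum>i<d. A $$ (i, i))"
  unfolding mtrace_def by simp

lemma mtrace_mult_trace_prod:
  assumes "A \<in> carrier_mat d d" "B \<in> carrier_mat d d"
  shows "mtrace (A * B) = trace_prod d (entries A) (entries B)"
  unfolding mtrace_def trace_prod_def using assms
  by (auto intro!: sum.cong simp: scalar_prod_def atLeast0LessThan)

lemma trace_prod_complementary:
  assumes "\<And>i j. i < d \<Longrightarrow> j < d \<Longrightarrow> F i j + F' i j = (if i = j then 1 else 0)"
  shows "trace_prod d F W + trace_prod d F' W = (\<Sum>i<d. W i i)"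
proof -
  have "trace_prod d F W + trace_prod d F' W = (\<Sum>i<d. \<Sum>k<d. (F i k + F' i k) * W k i)"
    unfolding trace_prod_def by (simp add: sum.distrib algebra_simps)
  also have "\<dots> = (\<Sum>i<d. W i i)"
    by (simp add: assms if_distrib[of "\<lambda>z. z * _"] cong: if_cong)
  finally show ?thesis .
qed

lemma orthogonal_if_complementary:
  assumes F': "psd_kernel d F'"
    and compl: "\<And>i j. i < d \<Longrightarrow> j < d \<Longrightarrow> F i j + F' i j = (if i = j then 1 else 0)"
    and x: "\<And>i. i < d \<Longrightarrow> (\<Sum>j<d. F' i j * x j) = 0"
    and y: "\<And>i. i < d \<Longrightarrow> (\<Sum>j<d. F i j * y j) = 0"
  shows "(\<Sum>l<d. cnj (x l) * y l) = 0"
proof -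
  have "y l = (\<Sum>j<d. F' l j * y j)" if l: "l < d" for l
  proof -
    have "y l = (\<Sum>j<d. (F l j + F' l j) * y j)"
      using l by (simp add: compl if_distrib[of "\<lambda>z. z * _"] cong: if_cong)
    also have "\<dots> = (\<Sum>j<d. F l j * y j) + (\<Sum>j<d. F' l j * y j)"
      by (simp add: distrib_right sum.distrib)
    finally show ?thesis using y[OF l] by simp
  qed
  then have "(\<Sum>l<d. cnj (x l) * y l) = sesq d F' x y"
    unfolding sesq_eq_sum_apply by simp
  also have "\<dots> = cnj (sesq d F' y x)" by (rule sesq_swap[OF F'])
  also have "sesq d F' y x = 0" unfolding sesq_eq_sum_apply using x by simp
  finally show ?thesis by simp
qed

lemma support_vectors_orthogonal:
  assumes \<rho>: "density d \<rho>" and \<sigma>: "density d \<sigma>"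
    and E: "psd d E" "psd d E'" "E + E' = 1\<^sub>m d" "mtrace (E * \<rho>) = 1" "mtrace (E' * \<sigma>) = 1"
    and x: "support_vector d (entries \<rho>) x" and y: "support_vector d (entries \<sigma>) y"
  shows "(\<Sum>l<d. cnj (x l) * y l) = 0"
proof (rule orthogonal_if_complementary)
  have carrier: "\<rho> \<in> carrier_mat d d" "\<sigma> \<in> carrier_mat d d" "E \<in> carrier_mat d d" "E' \<in> carrier_mat d d"
    using \<rho> \<sigma> E(1,2) by (simp_all add: density_def psd_def)
  show compl: "E $$ (i, j) + E' $$ (i, j) = (if i = j then 1 else 0)" if "i < d" "j < d" for i j
    using arg_cong[OF E(3), of "\<lambda>M. M $$ (i, j)"] carrier that by simp
  have trace: "(\<Sum>i<d. \<rho> $$ (i, i)) = 1" "(\<Sum>i<d. \<sigma> $$ (i, i)) = 1"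
    using \<rho> \<sigma> carrier by (simp_all add: density_def mtrace_carrier)
  have "trace_prod d (entries E) (entries \<rho>) = 1" "trace_prod d (entries E') (entries \<sigma>) = 1"
    using E(4,5) carrier by (simp_all add: mtrace_mult_trace_prod)
  then have "trace_prod d (entries E') (entries \<rho>) = 0" "trace_prod d (entries E) (entries \<sigma>) = 0"
    using trace_prod_complementary[of d "entries E" "entries E'" "entries \<rho>", OF compl]
      trace_prod_complementary[of d "entries E" "entries E'" "entries \<sigma>", OF compl] trace by simp_all
  then show "\<And>i. i < d \<Longrightarrow> (\<Sum>j<d. E' $$ (i, j) * x j) = 0" "\<And>i. i < d \<Longrightarrow> (\<Sum>j<d. E $$ (i, j) * y j) = 0"
    using x y psd_kernel_entries[OF E(1)] psd_kernel_entries[OF E(2)] unfolding support_vector_def by blast+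
  show "psd_kernel d (entries E')" by (rule psd_kernel_entries[OF E(2)])
qed

lemma wins_PD_quantum_imp_le:
  assumes "wins_PD n d {\<rho>. density d \<rho>} {E. psd d E}"
  shows "n \<le> d"
proof -
  obtain \<omega> where states: "\<And>\<eta>. \<eta> < n \<Longrightarrow> density d (\<omega> \<eta>)"
    and meas: "\<And>\<eta> \<eta>'. \<eta> < n \<Longrightarrow> \<eta>' < n \<Longrightarrow> \<eta> \<noteq> \<eta>' \<Longrightarrow> \<exists>E. psd d (E \<eta>) \<and> psd d (E \<eta>') \<and>
       E \<eta> + E \<eta>' = 1\<^sub>m d \<and> mtrace (E \<eta> * \<omega> \<eta>) = 1 \<and> mtrace (E \<eta>' * \<omega> \<eta>') = 1"
    using assms unfolding wins_PD_def mem_Collect_eq by blast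
  have "\<exists>x. support_vector d (entries (\<omega> \<eta>)) x" if "\<eta> < n" for \<eta>
  proof -
    have psd: "psd d (\<omega> \<eta>)" and "mtrace (\<omega> \<eta>) = 1"
      using states[OF that] by (simp_all add: density_def)
    moreover have "\<omega> \<eta> \<in> carrier_mat d d" using psd unfolding psd_def by blast
    ultimately have "(\<Sum>k<d. \<omega> \<eta> $$ (k, k)) \<noteq> 0" by (simp add: mtrace_carrier)
    then show ?thesis using psd_kernel_support_vector[OF psd_kernel_entries[OF psd]] by blast
  qed
  then obtain X where X: "\<And>\<eta>. \<eta> < n \<Longrightarrow> support_vector d (entries (\<omega> \<eta>)) (X \<eta>)" by metis
  show ?thesis
  proof (rule orthogonal_nonzero_card_le)
    show "\<exists>l<d. X \<eta> l \<noteq> 0" if "\<eta> < n" for \<eta> using X[OF that] by (simp add: support_vector_def)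
    fix a b assume ab: "a < n" "b < n" "a \<noteq> b"
    then obtain E where "psd d (E a)" "psd d (E b)" "E a + E b = 1\<^sub>m d"
      "mtrace (E a * \<omega> a) = 1" "mtrace (E b * \<omega> b) = 1" using meas by blast
    then show "(\<Sum>l<d. cnj (X a l) * X b l) = 0"
      using support_vectors_orthogonal states X ab by blast
  qed
qed

definition real_diag_mat :: "nat \<Rightarrow> (nat \<Rightarrow> real) \<Rightarrow> complex mat"
  where "real_diag_mat d c = mat d d (\<lambda>(i, j). if i = j then complex_of_real (c i) else 0)"

lemma psd_real_diag_mat: assumes "\<And>i. c i \<ge> 0" shows "psd d (real_diag_mat d c)"
  unfolding psd_def
proof (intro conjI ballI)
  show "real_diag_mat d c \<in> carrier_mat d d" unfolding real_diag_mat_def by simp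
  fix v :: "complex vec"
  have "(\<Sum>i<d. \<Sum>j<d. cnj (v $ i) * real_diag_mat d c $$ (i, j) * v $ j)
      = (\<Sum>i<d. complex_of_real (c i) * (v $ i * cnj (v $ i)))"
    unfolding real_diag_mat_def
    by (simp add: if_distrib[of "\<lambda>z. _ * z * _"] cong: if_cong) (simp add: mult_ac)
  also have "\<dots> = complex_of_real (\<Sum>i<d. c i * (cmod (v $ i))\<^sup>2)"
    unfolding of_real_sum by (simp only: of_real_mult complex_norm_square)
  finally have eq: "(\<Sum>i<d. \<Sum>j<d. cnj (v $ i) * real_diag_mat d c $$ (i, j) * v $ j)
      = complex_of_real (\<Sum>i<d. c i * (cmod (v $ i))\<^sup>2)" .
  then show "Im (\<Sum>i<d. \<Sum>j<d. cnj (v $ i) * real_diag_mat d c $$ (i, j) * v $ j) = 0"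
    "Re (\<Sum>i<d. \<Sum>j<d. cnj (v $ i) * real_diag_mat d c $$ (i, j) * v $ j) \<ge> 0"
    unfolding eq using assms by (simp_all add: sum_nonneg)
qed

lemma mtrace_real_diag_mat_mult:
  "mtrace (real_diag_mat d c * real_diag_mat d c') = (\<Sum>i<d. complex_of_real (c i * c' i))"
  unfolding mtrace_def real_diag_mat_def
  by (auto intro!: sum.cong simp: scalar_prod_def atLeast0LessThan if_distrib cong: if_cong)

lemma wins_PD_quantum_basis:
  assumes "n \<le> d" shows "wins_PD n d {\<rho>. density d \<rho>} {E. psd d E}"
proof -
  define e where "e \<eta> = real_diag_mat d (\<lambda>i. if i = \<eta> then 1 else 0)" for \<eta>
  define e' where "e' \<eta> = real_diag_mat d (\<lambda>i. if i = \<eta> then 0 else 1)" for \<eta>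
  have psd: "psd d (e \<eta>)" "psd d (e' \<eta>)" for \<eta> unfolding e_def e'_def by (simp_all add: psd_real_diag_mat)
  have trace_e: "mtrace (e \<eta> * e \<eta>) = 1" if "\<eta> < d" for \<eta>
  proof -
    have "mtrace (e \<eta> * e \<eta>) = (\<Sum>i<d. if i = \<eta> then 1 else 0)"
      unfolding e_def mtrace_real_diag_mat_mult by (intro sum.cong refl) auto
    then show ?thesis using that by simp
  qed
  have trace_e': "mtrace (e' \<eta> * e \<eta>') = 1" if "\<eta>' < d" "\<eta> \<noteq> \<eta>'" for \<eta> \<eta>'
  proof -
    have "mtrace (e' \<eta> * e \<eta>') = (\<Sum>i<d. if i = \<eta>' then 1 else 0)"
      unfolding e_def e'_def mtrace_real_diag_mat_mult using that(2) by (intro sum.cong refl) auto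
    then show ?thesis using that(1) by simp
  qed
  have "mtrace (e \<eta>) = 1" if "\<eta> < d" for \<eta>
    unfolding e_def real_diag_mat_def mtrace_def using that
    by (simp add: if_distrib[of complex_of_real] cong: if_cong)
  then have density: "density d (e \<eta>)" if "\<eta> < d" for \<eta> using psd that by (simp add: density_def)
  have complement: "e \<eta> + e' \<eta> = 1\<^sub>m d" for \<eta>
    unfolding e_def e'_def real_diag_mat_def by (rule eq_matI) auto
  show ?thesis
    unfolding wins_PD_def
  proof (rule exI[of _ e], intro conjI allI impI)
    fix \<eta> \<eta>' :: nat assume "\<eta> < n" "\<eta>' < n" "\<eta> \<noteq> \<eta>'"
    then show "\<exists>E. E \<eta> \<in> {E. psd d E} \<and> E \<eta>' \<in> {E. psd d E} \<and> E \<eta> + E \<eta>' = 1\<^sub>m d \<and>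
        mtrace (E \<eta> * e \<eta>) = 1 \<and> mtrace (E \<eta>' * e \<eta>') = 1"
      using assms psd trace_e trace_e' complement
      by (intro exI[of _ "\<lambda>m. if m = \<eta> then e \<eta> else e' \<eta>"]) auto
  qed (use assms density in auto)
qed

lemma wins_PD_qubits_iff: "wins_PD_qubits n k \<longleftrightarrow> n \<le> 2 ^ k"
  unfolding wins_PD_qubits_def qstates_def qeffects_def
  using wins_PD_quantum_imp_le wins_PD_quantum_basis by blast

section \<open>Pauli matrices and Bloch vectors\<close>

(* sigma 0 is the identity and sigma 1, sigma 2, sigma 3 are the Pauli matrices X, Y, Z. *)
definition sigma :: "nat \<Rightarrow> complex mat"
  where "sigma a = mat 2 2 (\<lambda>(i, j).
     if a = 0 then (if i = j then 1 else 0)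
     else if a = 1 then (if i = j then 0 else 1)
     else if a = 2 then (if i = j then 0 else if i = 0 then - \<i> else \<i>)
     else (if i = j then (if i = 0 then 1 else - 1) else 0))"

definition proj2 :: "complex vec \<Rightarrow> complex mat"
  where "proj2 v = mat 2 2 (\<lambda>(i, j). v $ i * cnj (v $ j))"

fun pauli_index :: "pauli \<Rightarrow> nat" where
  "pauli_index PX = 1"
| "pauli_index PY = 2"
| "pauli_index PZ = 3"

definition eigensign :: "bool \<Rightarrow> real"
  where "eigensign b = (if b then - 1 else 1)"

definition ket_bloch :: "pauli \<Rightarrow> bool \<Rightarrow> nat \<Rightarrow> real"
  where "ket_bloch k b a = (if a = 0 then 1 else if a = pauli_index k then eigensign b else 0)"

lemma pauli_index_bounds: "pauli_index k \<noteq> 0" "pauli_index k < 4" "pauli_index k \<in> {1, 2, 3}"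
  by (cases k; simp)+

lemma pauli_index_inj: "pauli_index k = pauli_index l \<longleftrightarrow> k = l"
  by (cases k; cases l; simp)

lemma abs_eigensign: "\<bar>eigensign b\<bar> = 1"
  by (simp add: eigensign_def)

lemma ket_bloch_simps:
  "ket_bloch k b 0 = 1"
  "ket_bloch k b (pauli_index k) = eigensign b"
  "k \<noteq> l \<Longrightarrow> ket_bloch k b (pauli_index l) = 0"
  by (simp_all add: ket_bloch_def pauli_index_bounds pauli_index_inj)

lemma eigensign_mult_self: "eigensign b * eigensign b = 1"
  by (simp add: eigensign_def)

lemma eigensign_mult_neq: "b \<noteq> c \<Longrightarrow> eigensign b * eigensign c = - 1"
  by (cases b; cases c) (simp_all add: eigensign_def)

lemma sum_lessThan_2: "(\<Sum>i<2. f i) = f 0 + f (1 :: nat)"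
  by (simp add: eval_nat_numeral)

lemma sum_lessThan_4: "(\<Sum>i<4. f i) = f 0 + f 1 + f 2 + f (3 :: nat)"
  by (simp add: eval_nat_numeral)

lemma trace_prod_2_sigma:
  "trace_prod 2 (entries P) (entries (sigma a)) =
    (if a = 0 then P $$ (0, 0) + P $$ (1, 1)
     else if a = 1 then P $$ (0, 1) + P $$ (1, 0)
     else if a = 2 then \<i> * (P $$ (0, 1) - P $$ (1, 0))
     else P $$ (0, 0) - P $$ (1, 1))"
  by (simp add: trace_prod_def sigma_def sum_lessThan_2 algebra_simps)

lemma ket_entries:
  "ket k b $ 0 = (if k = PZ then (if b then 0 else 1) else complex_of_real (1 / sqrt 2))"
  "ket k b $ Suc 0 = (if k = PZ then (if b then 1 else 0)
     else (if k = PX then 1 else \<i>) * (if b then - 1 else 1) * complex_of_real (1 / sqrt 2))"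
  by (cases k; cases b; simp add: ket_def Let_def vec_of_list_index del: vec_of_list_Cons)+

lemma trace_prod_proj2_ket_sigma:
  assumes "a < 4"
  shows "trace_prod 2 (entries (proj2 (ket k b))) (entries (sigma a)) = complex_of_real (ket_bloch k b a)"
proof -
  have sqrt2: "complex_of_real (sqrt 2) * complex_of_real (sqrt 2) = 2"
    by (simp flip: of_real_mult)
  have "a = 0 \<or> a = 1 \<or> a = 2 \<or> a = 3" using assms by auto
  then show ?thesis
    by (elim disjE; cases k; cases b)
      (simp_all add: trace_prod_2_sigma proj2_def ket_entries ket_bloch_def eigensign_def sqrt2
        algebra_simps)
qed

lemma proj2_psd: "psd 2 (proj2 v)"
  unfolding psd_def
proof (intro conjI ballI)
  show "proj2 v \<in> carrier_mat 2 2" unfolding proj2_def by simp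
  fix w :: "complex vec"
  define c where "c = (\<Sum>i<2. cnj (w $ i) * v $ i)"
  have "(\<Sum>i<2. \<Sum>j<2. cnj (w $ i) * proj2 v $$ (i, j) * w $ j)
      = (\<Sum>i<2. \<Sum>j<2. (cnj (w $ i) * v $ i) * cnj (cnj (w $ j) * v $ j))"
    unfolding proj2_def by (intro sum.cong refl) (simp add: mult_ac)
  also have "\<dots> = c * cnj c"
    unfolding c_def cnj_sum sum_product ..
  also have "\<dots> = complex_of_real ((cmod c)\<^sup>2)"
    by (rule complex_norm_square[symmetric])
  finally have eq: "(\<Sum>i<2. \<Sum>j<2. cnj (w $ i) * proj2 v $$ (i, j) * w $ j) = complex_of_real ((cmod c)\<^sup>2)" .
  show "Im (\<Sum>i<2. \<Sum>j<2. cnj (w $ i) * proj2 v $$ (i, j) * w $ j) = 0"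
    "Re (\<Sum>i<2. \<Sum>j<2. cnj (w $ i) * proj2 v $$ (i, j) * w $ j) \<ge> 0"
    unfolding eq by simp_all
qed

definition bloch :: "complex mat \<Rightarrow> nat \<Rightarrow> real"
  where "bloch P a = Re (trace_prod 2 (entries P) (entries (sigma a)))"

definition bloch_cone :: "(nat \<Rightarrow> real) \<Rightarrow> bool"
  where "bloch_cone p \<longleftrightarrow> 0 \<le> p 0 \<and> (p 1)\<^sup>2 + (p 2)\<^sup>2 + (p 3)\<^sup>2 \<le> (p 0)\<^sup>2"

lemma psd_bloch:
  assumes P: "psd 2 P"
  shows trace_prod_sigma_bloch: "a < 4 \<Longrightarrow> trace_prod 2 (entries P) (entries (sigma a)) = of_real (bloch P a)"
    and bloch_cone_bloch: "bloch_cone (bloch P)"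
proof -
  have F: "psd_kernel 2 (entries P)" by (rule psd_kernel_entries[OF P])
  define x where "x = Re (P $$ (0, 0))"
  define y where "y = Re (P $$ (1, 1))"
  define u where "u = P $$ (0, 1)"
  have diag: "P $$ (0, 0) = of_real x" "0 \<le> x" "P $$ (1, 1) = of_real y" "0 \<le> y"
    using psd_kernel_diag[OF F, of 0] psd_kernel_diag[OF F, of 1]
    by (auto simp: x_def y_def complex_eq_iff)
  have off: "P $$ (1, 0) = cnj u" unfolding u_def using psd_kernel_hermitian[OF F, of 0 1] by simp
  have "(cmod u)\<^sup>2 \<le> x * y"
    using psd_kernel_Cauchy_Schwarz[OF F, of "unit_fn 0" "unit_fn 1"]
    by (simp add: sesq_unit_fn u_def x_def y_def mult.commute)
  have traces: "trace_prod 2 (entries P) (entries (sigma a)) =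
      of_real (if a = 0 then x + y else if a = 1 then 2 * Re u else if a = 2 then - 2 * Im u else x - y)" for a
    unfolding trace_prod_2_sigma diag off u_def[symmetric] by (simp add: complex_eq_iff)
  then show "a < 4 \<Longrightarrow> trace_prod 2 (entries P) (entries (sigma a)) = of_real (bloch P a)" for a
    by (simp add: bloch_def)
  have "(2 * Re u)\<^sup>2 + (- 2 * Im u)\<^sup>2 = 4 * (cmod u)\<^sup>2"
    unfolding cmod_power2 by (simp add: power2_eq_square algebra_simps)
  then show "bloch_cone (bloch P)"
    unfolding bloch_cone_def bloch_def traces using \<open>(cmod u)\<^sup>2 \<le> x * y\<close> diag
    by (simp add: power2_eq_square algebra_simps)
qed

lemma bloch_proj2_ket: "a < 4 \<Longrightarrow> bloch (proj2 (ket k b)) a = ket_bloch k b a"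
  unfolding bloch_def by (simp add: trace_prod_proj2_ket_sigma)

lemma kron2_carrier: "kron2 A B \<in> carrier_mat 4 4"
  by (simp add: kron2_def)

lemma trace_prod_kron2:
  "trace_prod 4 (entries (kron2 P Q)) (entries (kron2 R S))
     = trace_prod 2 (entries P) (entries R) * trace_prod 2 (entries Q) (entries S)"
  unfolding trace_prod_def kron2_def by (simp add: sum_lessThan_4 sum_lessThan_2 algebra_simps)

section \<open>Effects of two SEP-bits\<close>

definition corr_effect :: "nat \<Rightarrow> nat \<Rightarrow> real \<Rightarrow> nat \<Rightarrow> nat \<Rightarrow> real \<Rightarrow> complex mat"
  where "corr_effect a b \<alpha> c e \<beta> = mat 4 4 (\<lambda>rs. 1 / 2 * (kron2 (sigma 0) (sigma 0) $$ rs
     + of_real \<alpha> * kron2 (sigma a) (sigma b) $$ rs + of_real \<beta> * kron2 (sigma c) (sigma e) $$ rs))"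

lemma corr_effect_carrier: "corr_effect a b \<alpha> c e \<beta> \<in> carrier_mat 4 4"
  unfolding corr_effect_def by simp

lemma trace_prod_corr_effect:
  "trace_prod 4 X (entries (corr_effect a b \<alpha> c e \<beta>)) = 1 / 2 * (trace_prod 4 X (entries (kron2 (sigma 0) (sigma 0)))
     + of_real \<alpha> * trace_prod 4 X (entries (kron2 (sigma a) (sigma b)))
     + of_real \<beta> * trace_prod 4 X (entries (kron2 (sigma c) (sigma e))))"
proof -
  have "trace_prod 4 X (entries (corr_effect a b \<alpha> c e \<beta>))
      = (\<Sum>i<4. \<Sum>k<4. X i k * (1 / 2 * (kron2 (sigma 0) (sigma 0) $$ (k, i)
          + of_real \<alpha> * kron2 (sigma a) (sigma b) $$ (k, i) + of_real \<beta> * kron2 (sigma c) (sigma e) $$ (k, i))))"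
    unfolding trace_prod_def by (intro sum.cong refl) (simp add: corr_effect_def)
  then show ?thesis
    unfolding trace_prod_def by (simp add: sum.distrib sum_distrib_left algebra_simps)
qed

lemma trace_prod_kron2_corr_effect:
  assumes P: "psd 2 P" and Q: "psd 2 Q" and "a < 4" "b < 4" "c < 4" "e < 4"
  shows "trace_prod 4 (entries (kron2 P Q)) (entries (corr_effect a b \<alpha> c e \<beta>)) = of_real
    (1 / 2 * (bloch P 0 * bloch Q 0 + \<alpha> * bloch P a * bloch Q b + \<beta> * bloch P c * bloch Q e))"
  unfolding trace_prod_corr_effect trace_prod_kron2 using assms
  by (simp add: trace_prod_sigma_bloch[OF P] trace_prod_sigma_bloch[OF Q])

lemma sigma_hermitian: "i < 2 \<Longrightarrow> j < 2 \<Longrightarrow> sigma a $$ (j, i) = cnj (sigma a $$ (i, j))"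
  unfolding sigma_def by auto

lemma corr_effect_hermitian: "hermitian 4 (corr_effect a b \<alpha> c e \<beta>)"
  unfolding hermitian_def
proof (intro conjI allI impI)
  fix i j :: nat assume "i < 4" "j < 4"
  then show "corr_effect a b \<alpha> c e \<beta> $$ (j, i) = cnj (corr_effect a b \<alpha> c e \<beta> $$ (i, j))"
    unfolding corr_effect_def kron2_def
    by (simp add: sigma_hermitian[of "i div 2" "j div 2"] sigma_hermitian[of "i mod 2" "j mod 2"])
qed (rule corr_effect_carrier)

lemma trace_prod_sep_cone_left:
  "trace_prod 4 (entries (mat 4 4 (\<lambda>rc. \<Sum>i<m. kron2 (P i) (Q i) $$ rc))) Y
     = (\<Sum>i<m. trace_prod 4 (entries (kron2 (P i) (Q i))) Y)"
proof -
  have "trace_prod 4 (entries (mat 4 4 (\<lambda>rc. \<Sum>i<m. kron2 (P i) (Q i) $$ rc))) Y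
      = (\<Sum>r<4. \<Sum>c<4. (\<Sum>i<m. kron2 (P i) (Q i) $$ (r, c)) * Y c r)"
    unfolding trace_prod_def by (intro sum.cong refl) simp
  also have "\<dots> = (\<Sum>i<m. trace_prod 4 (entries (kron2 (P i) (Q i))) Y)"
    unfolding trace_prod_def sum_distrib_right by (simp add: sum.swap[of _ "{..<m}"])
  finally show ?thesis .
qed

lemma corr_effect_mem_sep_effects:
  assumes abce: "a < 4" "b < 4" "c < 4" "e < 4"
    and bound: "\<And>p q. bloch_cone p \<Longrightarrow> bloch_cone q \<Longrightarrow> \<bar>\<alpha> * p a * q b + \<beta> * p c * q e\<bar> \<le> p 0 * q 0"
  shows "corr_effect a b \<alpha> c e \<beta> \<in> sep_effects"
  unfolding sep_effects_def mem_Collect_eq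
proof (rule conjI[OF corr_effect_hermitian], intro ballI)
  fix X assume "X \<in> sep_cone"
  then obtain m :: nat and P Q where PQ: "\<And>i. i < m \<Longrightarrow> psd 2 (P i) \<and> psd 2 (Q i)"
    and X: "X = mat 4 4 (\<lambda>rc. \<Sum>i<m. kron2 (P i) (Q i) $$ rc)"
    unfolding sep_cone_def by blast
  have summand: "Im (trace_prod 4 (entries (kron2 (P i) (Q i))) (entries (corr_effect a b \<alpha> c e \<beta>))) = 0 \<and>
      Re (trace_prod 4 (entries (kron2 (P i) (Q i))) (entries (corr_effect a b \<alpha> c e \<beta>))) \<ge> 0"
    if "i < m" for i
  proof -
    have "\<alpha> * bloch (P i) a * bloch (Q i) b + \<beta> * bloch (P i) c * bloch (Q i) e \<ge> - (bloch (P i) 0 * bloch (Q i) 0)"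
      using bound[OF bloch_cone_bloch bloch_cone_bloch] PQ[OF that] by (smt (verit))
    then show ?thesis
      by (simp add: trace_prod_kron2_corr_effect PQ[OF that] abce)
  qed
  have "mtrace (X * corr_effect a b \<alpha> c e \<beta>) = (\<Sum>i<m. trace_prod 4 (entries (kron2 (P i) (Q i))) (entries (corr_effect a b \<alpha> c e \<beta>)))"
    unfolding X by (subst mtrace_mult_trace_prod[OF _ corr_effect_carrier]) (simp_all add: trace_prod_sep_cone_left)
  then show "Im (mtrace (X * corr_effect a b \<alpha> c e \<beta>)) = 0 \<and> Re (mtrace (X * corr_effect a b \<alpha> c e \<beta>)) \<ge> 0"
    using summand by simp (intro sum_nonneg, simp)
qed

lemma abs_mult_add_abs_mult_le:
  fixes x0 x1 x2 y0 y1 y2 :: real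
  assumes "x1\<^sup>2 + x2\<^sup>2 \<le> x0\<^sup>2" "y1\<^sup>2 + y2\<^sup>2 \<le> y0\<^sup>2" "0 \<le> x0" "0 \<le> y0"
  shows "\<bar>x1 * y1\<bar> + \<bar>x2 * y2\<bar> \<le> x0 * y0"
proof -
  define a b c d where "a = \<bar>x1\<bar>" "b = \<bar>y1\<bar>" "c = \<bar>x2\<bar>" "d = \<bar>y2\<bar>"
  have "(a * b + c * d)\<^sup>2 = (a\<^sup>2 + c\<^sup>2) * (b\<^sup>2 + d\<^sup>2) - (a * d - c * b)\<^sup>2"
    by (simp add: power2_eq_square algebra_simps)
  also have "\<dots> \<le> (x1\<^sup>2 + x2\<^sup>2) * (y1\<^sup>2 + y2\<^sup>2)"
    by (simp add: a_b_c_d_def)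
  also have "\<dots> \<le> (x0 * y0)\<^sup>2"
    unfolding power_mult_distrib by (rule mult_mono) (use assms in auto)
  finally have "a * b + c * d \<le> x0 * y0"
    by (rule power2_le_imp_le) (use assms(3,4) in simp)
  then show ?thesis by (simp add: a_b_c_d_def abs_mult)
qed

lemma bloch_cone_two_axes:
  assumes p: "bloch_cone p" and "k \<in> {1, 2, 3}" "l \<in> {1, 2, 3}" "k \<noteq> l"
  shows "(p k)\<^sup>2 + (p l)\<^sup>2 \<le> (p 0)\<^sup>2"
  using assms unfolding bloch_cone_def by auto (smt (verit) zero_le_power2)+

lemma bloch_cone_abs_le:
  assumes p: "bloch_cone p" and "a < 4"
  shows "\<bar>p a\<bar> \<le> p 0"
proof -
  have "a = 0 \<or> a = 1 \<or> a = 2 \<or> a = 3" using \<open>a < 4\<close> by auto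
  then have "(p a)\<^sup>2 \<le> (p 0)\<^sup>2"
    using p unfolding bloch_cone_def by auto (smt (verit) zero_le_power2)+
  then show ?thesis using p unfolding bloch_cone_def by (metis abs_le_square_iff abs_of_nonneg)
qed

lemma corr_effect_two_axes_mem_sep_effects:
  assumes kl: "k \<in> {1, 2, 3}" "l \<in> {1, 2, 3}" "k \<noteq> l" and "\<bar>\<alpha>\<bar> \<le> 1" "\<bar>\<beta>\<bar> \<le> 1"
  shows "corr_effect k k \<alpha> l l \<beta> \<in> sep_effects"
proof (rule corr_effect_mem_sep_effects)
  show "k < 4" "k < 4" "l < 4" "l < 4" using kl by auto
  fix p q assume p: "bloch_cone p" and q: "bloch_cone q"
  have "\<bar>\<alpha> * p k * q k + \<beta> * p l * q l\<bar> \<le> \<bar>\<alpha>\<bar> * \<bar>p k * q k\<bar> + \<bar>\<beta>\<bar> * \<bar>p l * q l\<bar>"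
    by (metis abs_mult abs_triangle_ineq mult.assoc)
  also have "\<dots> \<le> \<bar>p k * q k\<bar> + \<bar>p l * q l\<bar>"
    using assms(4,5) by (intro add_mono) (auto intro: mult_left_le_one_le)
  also have "\<dots> \<le> p 0 * q 0"
    using abs_mult_add_abs_mult_le[OF bloch_cone_two_axes[OF p kl] bloch_cone_two_axes[OF q kl]] p q
    unfolding bloch_cone_def by simp
  finally show "\<bar>\<alpha> * p k * q k + \<beta> * p l * q l\<bar> \<le> p 0 * q 0" .
qed

lemma corr_effect_one_term_mem_sep_effects:
  assumes ab: "a < 4" "b < 4" and "\<bar>\<alpha>\<bar> \<le> 1"
  shows "corr_effect a b \<alpha> 0 0 0 \<in> sep_effects"
proof (rule corr_effect_mem_sep_effects)
  show "a < 4" "b < 4" "0 < (4::nat)" "0 < (4::nat)" using ab by auto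
  fix p q assume p: "bloch_cone p" and q: "bloch_cone q"
  have "\<bar>\<alpha> * p a * q b + 0 * p 0 * q 0\<bar> = \<bar>\<alpha>\<bar> * (\<bar>p a\<bar> * \<bar>q b\<bar>)"
    by (simp add: abs_mult)
  also have "\<dots> \<le> 1 * (p 0 * q 0)"
    using assms(3) bloch_cone_abs_le[OF p ab(1)] bloch_cone_abs_le[OF q ab(2)]
    by (intro mult_mono) auto
  finally show "\<bar>\<alpha> * p a * q b + 0 * p 0 * q 0\<bar> \<le> p 0 * q 0" by simp
qed

lemma kron2_sigma_0: "kron2 (sigma 0) (sigma 0) = 1\<^sub>m 4"
proof (rule eq_matI)
  fix i j :: nat assume "i < dim_row (1\<^sub>m 4)" "j < dim_col (1\<^sub>m 4)"
  moreover have "i = j \<longleftrightarrow> i div 2 = j div 2 \<and> i mod 2 = j mod 2"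
    by (metis div_mult_mod_eq)
  ultimately show "kron2 (sigma 0) (sigma 0) $$ (i, j) = 1\<^sub>m 4 $$ (i, j)"
    unfolding kron2_def sigma_def by auto
qed (simp_all add: kron2_def)

lemma one_minus_corr_effect: "1\<^sub>m 4 - corr_effect a b \<alpha> c e \<beta> = corr_effect a b (- \<alpha>) c e (- \<beta>)"
  by (rule eq_matI) (auto simp: corr_effect_def kron2_sigma_0 algebra_simps)

section \<open>Distinguishing the states A\<close>

lemma A_state_kron2: "A_state (k, b1, b2) = kron2 (proj2 (ket k b1)) (proj2 (ket k b2))"
  by (rule eq_matI) (simp_all add: A_state_def proj4_def ket2_def kron2_def proj2_def)

lemma A_state_carrier: "A_state s \<in> carrier_mat 4 4"
  by (cases s) (simp add: A_state_kron2 kron2_carrier)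

lemma mtrace_corr_effect_A_state:
  assumes "a < 4" "b < 4" "c < 4" "e < 4"
  shows "mtrace (corr_effect a b \<alpha> c e \<beta> * A_state (k, b1, b2)) = complex_of_real (1 / 2 *
    (1 + \<alpha> * ket_bloch k b1 a * ket_bloch k b2 b + \<beta> * ket_bloch k b1 c * ket_bloch k b2 e))"
  unfolding mtrace_mult_trace_prod[OF corr_effect_carrier A_state_carrier]
  using assms by (subst trace_prod_commute)
    (simp add: A_state_kron2 trace_prod_kron2_corr_effect proj2_psd bloch_proj2_ket ket_bloch_def)

lemma A_state_mem_sep_states: "A_state s \<in> sep_states"
proof -
  obtain k b1 b2 where s: "s = (k, b1, b2)" by (cases s)
  have "A_state s = mat 4 4 (\<lambda>rc. \<Sum>i<Suc 0. kron2 (proj2 (ket k b1)) (proj2 (ket k b2)) $$ rc)"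
    unfolding s A_state_kron2 by (rule eq_matI) (simp_all add: kron2_def)
  then have cone: "A_state s \<in> sep_cone"
    unfolding sep_cone_def mem_Collect_eq
    by (intro exI[of _ "Suc 0"] exI[of _ "\<lambda>_. proj2 (ket k b1)"] exI[of _ "\<lambda>_. proj2 (ket k b2)"])
      (simp add: proj2_psd)
  have "mtrace (A_state s) = mtrace (kron2 (sigma 0) (sigma 0) * A_state s)"
    unfolding kron2_sigma_0 using left_mult_one_mat[OF A_state_carrier] by simp
  also have "\<dots> = trace_prod 4 (entries (A_state s)) (entries (kron2 (sigma 0) (sigma 0)))"
    by (simp only: mtrace_mult_trace_prod[OF kron2_carrier A_state_carrier]
        trace_prod_commute[of 4 "entries (kron2 (sigma 0) (sigma 0))"])
  also have "\<dots> = 1"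
    unfolding s A_state_kron2 trace_prod_kron2 by (simp add: trace_prod_proj2_ket_sigma ket_bloch_def)
  finally show ?thesis using cone unfolding sep_states_def by simp
qed

lemma A_state_distinguished_by_corr_effect:
  assumes abce: "a < 4" "b < 4" "c < 4" "e < 4"
    and mem: "\<And>s. \<bar>s\<bar> = 1 \<Longrightarrow> corr_effect a b (s * \<alpha>) c e (s * \<beta>) \<in> sep_effects"
    and one: "\<alpha> * ket_bloch k b1 a * ket_bloch k b2 b + \<beta> * ket_bloch k b1 c * ket_bloch k b2 e = 1"
    and minus_one: "\<alpha> * ket_bloch l c1 a * ket_bloch l c2 b + \<beta> * ket_bloch l c1 c * ket_bloch l c2 e = - 1"
  shows "\<exists>E. E \<in> sep_effects \<and> 1\<^sub>m 4 - E \<in> sep_effects \<and>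
    mtrace (E * A_state (k, b1, b2)) = 1 \<and> mtrace (E * A_state (l, c1, c2)) = 0"
proof (intro exI[of _ "corr_effect a b \<alpha> c e \<beta>"] conjI)
  show "mtrace (corr_effect a b \<alpha> c e \<beta> * A_state (k, b1, b2)) = 1"
    "mtrace (corr_effect a b \<alpha> c e \<beta> * A_state (l, c1, c2)) = 0"
    unfolding mtrace_corr_effect_A_state[OF abce] add.assoc one minus_one by simp_all
qed (use mem[of 1] mem[of "- 1"] in \<open>simp_all add: one_minus_corr_effect\<close>)

lemma A_state_distinguishable:
  assumes "(k, b1, b2) \<noteq> (l, c1, c2)"
  shows "\<exists>E. E \<in> sep_effects \<and> 1\<^sub>m 4 - E \<in> sep_effects \<and>
    mtrace (E * A_state (k, b1, b2)) = 1 \<and> mtrace (E * A_state (l, c1, c2)) = 0"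
proof -
  let ?s = eigensign and ?n = pauli_index
  consider "k \<noteq> l" | "k = l" "b1 \<noteq> c1" | "k = l" "b2 \<noteq> c2"
    using assms by auto
  then show ?thesis
  proof cases
    case 1
    then have kl: "k \<noteq> l" and lk: "l \<noteq> k" by auto
    show ?thesis
      by (rule A_state_distinguished_by_corr_effect[where a = "?n k" and b = "?n k" and c = "?n l" and e = "?n l"
            and \<alpha> = "?s b1 * ?s b2" and \<beta> = "- (?s c1 * ?s c2)"];
          auto intro!: corr_effect_two_axes_mem_sep_effects pauli_index_bounds(3)
            simp: pauli_index_bounds pauli_index_inj ket_bloch_simps kl lk abs_mult abs_eigensign eigensign_def)
  next
    case 2
    show ?thesis
      by (rule A_state_distinguished_by_corr_effect[where a = "?n k" and b = 0 and c = 0 and e = 0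
            and \<alpha> = "?s b1" and \<beta> = 0];
          auto intro!: corr_effect_one_term_mem_sep_effects
            simp: 2 pauli_index_bounds ket_bloch_simps abs_mult abs_eigensign eigensign_mult_self eigensign_mult_neq)
  next
    case 3
    show ?thesis
      by (rule A_state_distinguished_by_corr_effect[where a = 0 and b = "?n k" and c = 0 and e = 0
            and \<alpha> = "?s b2" and \<beta> = 0];
          auto intro!: corr_effect_one_term_mem_sep_effects
            simp: 3 pauli_index_bounds ket_bloch_simps abs_mult abs_eigensign eigensign_mult_self eigensign_mult_neq)
  qed
qed

lemma A_state_pairwise_distinguishable:
  "sep_pairwise_distinguishable (UNIV :: (pauli \<times> bool \<times> bool) set) A_state"
  unfolding sep_pairwise_distinguishable_def by (metis A_state_distinguishable prod_cases3)

lemma sep_effects_carrier: "E \<in> sep_effects \<Longrightarrow> E \<in> carrier_mat 4 4"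
  unfolding sep_effects_def hermitian_def by simp

lemma sep_states_carrier: "X \<in> sep_states \<Longrightarrow> X \<in> carrier_mat 4 4"
  unfolding sep_states_def sep_cone_def by auto

lemma wins_PD_sep_if_pairwise_distinguishable:
  assumes dist: "sep_pairwise_distinguishable I \<omega>" and states: "\<And>i. i \<in> I \<Longrightarrow> \<omega> i \<in> sep_states"
    and f: "inj_on f {..<n}" "f ` {..<n} \<subseteq> I"
  shows "wins_PD n 4 sep_states sep_effects"
  unfolding wins_PD_def
proof (rule exI[of _ "\<omega> \<circ> f"], intro conjI allI impI)
  show "(\<omega> \<circ> f) \<eta> \<in> sep_states" if "\<eta> < n" for \<eta> using states f(2) that by auto
  fix \<eta> \<eta>' :: nat assume "\<eta> < n" "\<eta>' < n" "\<eta> \<noteq> \<eta>'"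
  then have "f \<eta> \<in> I" "f \<eta>' \<in> I" "f \<eta> \<noteq> f \<eta>'" using f by (auto dest: inj_onD)
  then obtain E where E: "E \<in> sep_effects" "1\<^sub>m 4 - E \<in> sep_effects"
    "mtrace (E * \<omega> (f \<eta>)) = 1" "mtrace (E * \<omega> (f \<eta>')) = 0"
    using dist unfolding sep_pairwise_distinguishable_def by blast
  have carrier: "E \<in> carrier_mat 4 4" "1\<^sub>m 4 - E \<in> carrier_mat 4 4" "\<omega> (f \<eta>') \<in> carrier_mat 4 4"
    using sep_effects_carrier[OF E(1)] sep_states_carrier[OF states[OF \<open>f \<eta>' \<in> I\<close>]]
    by (simp_all add: minus_carrier_mat)
  have "mtrace ((1\<^sub>m 4 - E) * \<omega> (f \<eta>')) = mtrace (\<omega> (f \<eta>')) - mtrace (E * \<omega> (f \<eta>'))"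
    using trace_prod_complementary[of 4 "entries E" "entries (1\<^sub>m 4 - E)" "entries (\<omega> (f \<eta>'))"] carrier
    by (simp add: mtrace_mult_trace_prod mtrace_carrier eq_diff_eq add.commute)
  then have "mtrace ((1\<^sub>m 4 - E) * \<omega> (f \<eta>')) = 1"
    using E(4) states[OF \<open>f \<eta>' \<in> I\<close>] by (simp add: sep_states_def)
  then show "\<exists>E'. E' \<eta> \<in> sep_effects \<and> E' \<eta>' \<in> sep_effects \<and> E' \<eta> + E' \<eta>' = 1\<^sub>m 4 \<and>
      mtrace (E' \<eta> * (\<omega> \<circ> f) \<eta>) = 1 \<and> mtrace (E' \<eta>' * (\<omega> \<circ> f) \<eta>') = 1"
    using E carrier \<open>\<eta> \<noteq> \<eta>'\<close>
    by (intro exI[of _ "\<lambda>m. if m = \<eta> then E else 1\<^sub>m 4 - E"]) auto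
qed

definition encode12 :: "nat \<Rightarrow> pauli \<times> bool \<times> bool"
  where "encode12 n = (if n < 4 then PX else if n < 8 then PY else PZ, odd (n div 2), odd n)"

lemma inj_on_encode12: "inj_on encode12 {..<12}"
proof (rule inj_onI)
  fix n m assume "n \<in> {..<12}" "m \<in> {..<12}" "encode12 n = encode12 m"
  then have "n < 12" "m < 12" "n < 4 \<longleftrightarrow> m < 4" "n < 8 \<longleftrightarrow> m < 8"
    "odd (n div 2) \<longleftrightarrow> odd (m div 2)" "odd n \<longleftrightarrow> odd m"
    unfolding encode12_def by (auto split: if_splits)
  then show "n = m" by presburger
qed

theorem theorem1:
  shows "(\<not> wins_PD_qubits 12 3 \<and> wins_PD_qubits 12 4 \<and>
          (\<forall>k. wins_PD_qubits 12 k \<longrightarrow> 4 \<le> k))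
       \<and> (sep_pairwise_distinguishable (UNIV :: (pauli \<times> bool \<times> bool) set) A_state
          \<and> wins_PD 12 4 sep_states sep_effects)"
proof (intro conjI allI impI)
  show "\<not> wins_PD_qubits 12 3" "wins_PD_qubits 12 4" by (simp_all add: wins_PD_qubits_iff)
  show "4 \<le> k" if "wins_PD_qubits 12 k" for k
  proof (rule ccontr)
    assume "\<not> 4 \<le> k"
    then have "(2::nat) ^ k \<le> 2 ^ 3" by (intro power_increasing) auto
    then show False using that by (simp add: wins_PD_qubits_iff)
  qed
  show "sep_pairwise_distinguishable UNIV A_state" by (rule A_state_pairwise_distinguishable)
  show "wins_PD 12 4 sep_states sep_effects"
    by (rule wins_PD_sep_if_pairwise_distinguishable[OF A_state_pairwise_distinguishable
          A_state_mem_sep_states inj_on_encode12]) simp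
qed

end
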